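(* Let $p,q\in[0,1]$ be real numbers and $R\in\{\mathrm{ML},\mathrm{wML},\mathrm C,\mathrm S\}$. Then every recursive temporal selection process belongs to $\mathscr S^{p,q}_{\mathscr F_R}$.
   Context: $\mathbb N_0=\{0,1,2,\dots\}$. $\mathbb S=\bigcup_{n\in\mathbb N_0}\{0,1\}^n$ is the set of situations, $\square$ the empty sequence, $|s|$ the length, $sx$ concatenation. For $r\in[0,1]$ and $f:\{0,1\}\to\mathbb R$, $E_r(f)=rf(1)+(1-r)f(0)$. A real process is $F:\mathbb S\to\mathbb R$, $\Delta F(s)$ is $x\mapsto F(sx)-F(s)$. A test process is a non-negative real process with $F(\square)=1$. A multiplier process $D$ assigns to each $s$ a function $D(s):\{0,1\}\to[0,\infty)$ and generates the test process $F(\square)=1$, $F(sx)=F(s)D(s)(x)$. Computability: maps from countable effectively encoded domains ($\mathbb N_0$, $\mathbb S$, products with $\{0,1\}$, $\mathbb N_0$) to $\mathbb N_0$, $\mathbb Q$ or $\{0,1\}$ are recursive if Turing-computable; a real map $r$ is lower semicomputable if $r(d)=\lim_nq(d,n)$ for a recursive rational $q$ non-decreasing in $n$. $\mathscr F_{\mathrm{ML}}$: lower semicomputable test processes; $\mathscr F_{\mathrm{wML}}$: test processes generated by lower semicomputable multiplier processes; $\mathscr F_{\mathrm C}=\mathscr F_{\mathrm S}$: positive, rational-valued, recursive test processes. A selection process is a map $S:\mathbb S\to\{0,1\}$; temporal if $S(s)$ depends only on $|s|$ (written $S(n)$). For a real process $F$ and $r\in[0,1]$, $S^r_F$ is the temporal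 selection process with $S^r_F(n)=1$ if $E_r(\Delta F(s))>0$ for some $s$ with $|s|=n$, and $0$ otherwise. For a set $\mathscr F$ of real processes, $\mathscr S^{p,q}_{\mathscr F}=\{S^r_F:F\in\mathscr F,\ r\in\{p,q\}\}$. *)

theory Defs
  imports Complex_Main "HOL-Library.Nat_Bijection"
begin

datatype recf = Zero | Succ | Proj nat | Comp recf "recf list" | Prec recf recf | Mn recf

inductive recfn_eval :: "recf \<Rightarrow> nat list \<Rightarrow> nat \<Rightarrow> bool" where
  zero: "recfn_eval Zero xs 0"
| succ: "recfn_eval Succ [x] (Suc x)"
| proj: "i < length xs \<Longrightarrow> recfn_eval (Proj i) xs (xs ! i)"
| comp: "recfn_eval f ys y \<Longrightarrow> length ys = length gs \<Longrightarrow>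
          (\<forall>i < length gs. recfn_eval (gs ! i) xs (ys ! i)) \<Longrightarrow>
          recfn_eval (Comp f gs) xs y"
| prec0: "recfn_eval f xs y \<Longrightarrow> recfn_eval (Prec f g) (0 # xs) y"
| precS: "recfn_eval (Prec f g) (n # xs) y \<Longrightarrow> recfn_eval g (y # n # xs) z \<Longrightarrow>
          recfn_eval (Prec f g) (Suc n # xs) z"
| mn: "recfn_eval f (n # xs) 0 \<Longrightarrow> (\<forall>m < n. \<exists>y. recfn_eval f (m # xs) (Suc y)) \<Longrightarrow>
          recfn_eval (Mn f) xs n"

definition computable1 :: "(nat \<Rightarrow> nat) \<Rightarrow> bool" where
  "computable1 f \<longleftrightarrow> (\<exists>r. \<forall>x. recfn_eval r [x] (f x))"

text \<open>Situations are finite binary sequences, modelled as bool lists (True = 1, False = 0);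
  the situation s x is s @ [x].  Bijective encoding of situations into nat.\<close>
fun enc_sit :: "bool list \<Rightarrow> nat" where
  "enc_sit [] = 0"
| "enc_sit (b # s) = 2 * enc_sit s + (if b then 2 else 1)"

definition enc_bit :: "bool \<Rightarrow> nat" where
  "enc_bit b = (if b then 1 else 0)"

definition rec_bool_map :: "('a \<Rightarrow> nat) \<Rightarrow> ('a \<Rightarrow> bool) \<Rightarrow> bool" where
  "rec_bool_map code S \<longleftrightarrow> (\<exists>a. computable1 a \<and> (\<forall>d. a (code d) = enc_bit (S d)))"

definition rec_rat_map :: "('a \<Rightarrow> nat) \<Rightarrow> ('a \<Rightarrow> real) \<Rightarrow> bool" where
  "rec_rat_map code q \<longleftrightarrow> (\<exists>a b c. computable1 a \<and> computable1 b \<and> computable1 c \<and>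
     (\<forall>d. q d = (real (a (code d)) - real (b (code d))) / real (Suc (c (code d)))))"

definition lower_semicomputable :: "('a \<Rightarrow> nat) \<Rightarrow> ('a \<Rightarrow> real) \<Rightarrow> bool" where
  "lower_semicomputable code r \<longleftrightarrow> (\<exists>q :: 'a \<times> nat \<Rightarrow> real.
     rec_rat_map (\<lambda>(d, n). prod_encode (code d, n)) q \<and>
     (\<forall>d n. q (d, n) \<le> q (d, Suc n)) \<and>
     (\<forall>d. (\<lambda>n. q (d, n)) \<longlonglongrightarrow> r d))"

definition E :: "real \<Rightarrow> (bool \<Rightarrow> real) \<Rightarrow> real" where
  "E r f = r * f True + (1 - r) * f False"

definition Delta :: "(bool list \<Rightarrow> real) \<Rightarrow> bool list \<Rightarrow> bool \<Rightarrow> real" where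
  "Delta F s = (\<lambda>x. F (s @ [x]) - F s)"

definition test_process :: "(bool list \<Rightarrow> real) \<Rightarrow> bool" where
  "test_process F \<longleftrightarrow> (\<forall>s. F s \<ge> 0) \<and> F [] = 1"

definition generated_by :: "(bool list \<Rightarrow> bool \<Rightarrow> real) \<Rightarrow> (bool list \<Rightarrow> real) \<Rightarrow> bool" where
  "generated_by D F \<longleftrightarrow> F [] = 1 \<and> (\<forall>s x. F (s @ [x]) = F s * D s x)"

definition multiplier_process :: "(bool list \<Rightarrow> bool \<Rightarrow> real) \<Rightarrow> bool" where
  "multiplier_process D \<longleftrightarrow> (\<forall>s x. D s x \<ge> 0)"

datatype randomness = R_ML | R_wML | R_C | R_S

definition F_ML :: "(bool list \<Rightarrow> real) set" where
  "F_ML = {F. test_process F \<and> lower_semicomputable enc_sit F}"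

definition F_wML :: "(bool list \<Rightarrow> real) set" where
  "F_wML = {F. test_process F \<and> (\<exists>D. multiplier_process D \<and>
      lower_semicomputable (\<lambda>(s, x). prod_encode (enc_sit s, enc_bit x)) (\<lambda>(s, x). D s x) \<and>
      generated_by D F)}"

definition F_C :: "(bool list \<Rightarrow> real) set" where
  "F_C = {F. test_process F \<and> (\<forall>s. F s > 0) \<and> (\<forall>s. F s \<in> \<rat>) \<and> rec_rat_map enc_sit F}"

fun F_class :: "randomness \<Rightarrow> (bool list \<Rightarrow> real) set" where
  "F_class R_ML = F_ML"
| "F_class R_wML = F_wML"
| "F_class R_C = F_C"
| "F_class R_S = F_C"

definition temporal :: "(bool list \<Rightarrow> bool) \<Rightarrow> bool" where
  "temporal S \<longleftrightarrow> (\<forall>s t. length s = length t \<longrightarrow> S s = S t)"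

text \<open>S^r_F, as a map on situations (it is temporal by construction).\<close>
definition sel_proc :: "real \<Rightarrow> (bool list \<Rightarrow> real) \<Rightarrow> bool list \<Rightarrow> bool" where
  "sel_proc r F s \<longleftrightarrow> (\<exists>t. length t = length s \<and> E r (Delta F t) > 0)"

definition sel_class :: "real \<Rightarrow> real \<Rightarrow> (bool list \<Rightarrow> real) set \<Rightarrow> (bool list \<Rightarrow> bool) set" where
  "sel_class p q FF = {sel_proc r F | r F. F \<in> FF \<and> r \<in> {p, q}}"

end

theory Submission
  imports Defs
begin

(* A temporal selection process S is a predicate T on lengths, T n = S (replicate n False).
   Let F s = 2 ^ #{k < |s|. T k}; it is generated by the multiplier D s = (if T |s| then 2 else 1),
   which ignores the next outcome, so E_r (Delta F s) = F s * (D s - 1) for every r: it is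
   positive exactly when T |s|, whence S = S^p_F.  F is positive, integer-valued and, by
   primitive recursion, recursive; so F lies in F_C, and constant approximations show that
   F and D are lower semicomputable, putting F in F_ML and F_wML as well. *)

definition computable :: "nat \<Rightarrow> (nat list \<Rightarrow> nat) \<Rightarrow> bool" where
  "computable k f \<longleftrightarrow> (\<exists>r. \<forall>xs. length xs = k \<longrightarrow> recfn_eval r xs (f xs))"

lemma computable_cong:
  assumes "computable k f" and "\<And>xs. length xs = k \<Longrightarrow> f xs = g xs"
  shows "computable k g"
  using assms unfolding computable_def by metis

lemma computable1_iff: "computable1 f \<longleftrightarrow> computable 1 (\<lambda>xs. f (xs ! 0))"
  unfolding computable1_def computable_def
  by (metis (no_types, opaque_lifting) One_nat_def length_0_conv length_Suc_conv nth_Cons_0)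

lemma computable_zero: "computable k (\<lambda>_. 0)"
  unfolding computable_def by (blast intro: recfn_eval.zero)

lemma computable_proj: "i < k \<Longrightarrow> computable k (\<lambda>xs. xs ! i)"
  unfolding computable_def by (blast intro: recfn_eval.proj)

lemma computable_compose1:
  assumes "computable1 f" and "computable k g"
  shows "computable k (\<lambda>xs. f (g xs))"
proof -
  obtain rf where rf: "\<And>x. recfn_eval rf [x] (f x)"
    using assms(1) unfolding computable1_def by blast
  obtain rg where rg: "\<And>xs. length xs = k \<Longrightarrow> recfn_eval rg xs (g xs)"
    using assms(2) unfolding computable_def by blast
  have "recfn_eval (Comp rf [rg]) xs (f (g xs))" if "length xs = k" for xs
    by (rule recfn_eval.comp[where ys = "[g xs]"]) (simp_all add: rf rg that)
  then show ?thesis unfolding computable_def by blast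
qed

lemma computable_compose2:
  assumes "computable 2 f" and "computable k g" and "computable k h"
  shows "computable k (\<lambda>xs. f [g xs, h xs])"
proof -
  obtain rf where rf: "\<And>xs. length xs = 2 \<Longrightarrow> recfn_eval rf xs (f xs)"
    using assms(1) unfolding computable_def by blast
  obtain rg where rg: "\<And>xs. length xs = k \<Longrightarrow> recfn_eval rg xs (g xs)"
    using assms(2) unfolding computable_def by blast
  obtain rh where rh: "\<And>xs. length xs = k \<Longrightarrow> recfn_eval rh xs (h xs)"
    using assms(3) unfolding computable_def by blast
  have "recfn_eval (Comp rf [rg, rh]) xs (f [g xs, h xs])" if "length xs = k" for xs
  proof (rule recfn_eval.comp[where ys = "[g xs, h xs]"])
    show "\<forall>i < length [rg, rh]. recfn_eval ([rg, rh] ! i) xs ([g xs, h xs] ! i)"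
      using rg rh that by (auto simp: less_Suc_eq)
  qed (simp_all add: rf)
  then show ?thesis unfolding computable_def by blast
qed

lemma computable1_Suc: "computable1 Suc"
  unfolding computable1_def by (blast intro: recfn_eval.succ)

lemma computable_Suc: "computable k g \<Longrightarrow> computable k (\<lambda>xs. Suc (g xs))"
  by (rule computable_compose1[OF computable1_Suc])

lemma computable_const: "computable k (\<lambda>_. c)"
  by (induction c) (simp_all add: computable_zero computable_Suc)

lemma computable1_compose: "computable1 f \<Longrightarrow> computable1 g \<Longrightarrow> computable1 (\<lambda>n. f (g n))"
  unfolding computable1_iff[of "\<lambda>n. f (g n)"] computable1_iff[of g]
  by (rule computable_compose1)

(* The arities k' and k'' are separate hypotheses so that the rule unifies with
   numerals such as 2 and 3. *)
lemma computable_prec: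
  assumes f: "computable k f" and g: "computable k' g" and "k' = Suc (Suc k)" and "k'' = Suc k"
    and h0: "\<And>ys. length ys = k \<Longrightarrow> h (0 # ys) = f ys"
    and hSuc: "\<And>n ys. length ys = k \<Longrightarrow> h (Suc n # ys) = g (h (n # ys) # n # ys)"
  shows "computable k'' h"
proof -
  obtain rf where rf: "\<And>xs. length xs = k \<Longrightarrow> recfn_eval rf xs (f xs)"
    using f unfolding computable_def by blast
  obtain rg where rg: "\<And>xs. length xs = k' \<Longrightarrow> recfn_eval rg xs (g xs)"
    using g unfolding computable_def by blast
  have "recfn_eval (Prec rf rg) (n # ys) (h (n # ys))" if "length ys = k" for n ys
  proof (induction n)
    case 0
    show ?case using rf that by (simp add: h0 recfn_eval.prec0)
  next
    case (Suc n)
    then show ?case using rg that \<open>k' = Suc (Suc k)\<close> by (simp add: hSuc recfn_eval.precS)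
  qed
  then show ?thesis
    unfolding computable_def using \<open>k'' = Suc k\<close> by (metis length_Suc_conv)
qed

lemma computable_Least:
  assumes f: "computable k' f" and "k' = Suc k"
    and ex: "\<And>ys. length ys = k \<Longrightarrow> \<exists>n. f (n # ys) = 0"
  shows "computable k (\<lambda>ys. LEAST n. f (n # ys) = 0)"
proof -
  obtain rf where rf: "\<And>xs. length xs = k' \<Longrightarrow> recfn_eval rf xs (f xs)"
    using f unfolding computable_def by blast
  have "recfn_eval (Mn rf) ys (LEAST n. f (n # ys) = 0)" if ys: "length ys = k" for ys
  proof (rule recfn_eval.mn)
    have rf_ys: "recfn_eval rf (n # ys) (f (n # ys))" for n
      using rf ys \<open>k' = Suc k\<close> by simp
    show "recfn_eval rf ((LEAST n. f (n # ys) = 0) # ys) 0"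
      using rf_ys LeastI_ex[OF ex[OF ys]] by metis
    show "\<forall>m < (LEAST n. f (n # ys) = 0). \<exists>y. recfn_eval rf (m # ys) (Suc y)"
    proof (intro allI impI)
      fix m assume "m < (LEAST n. f (n # ys) = 0)"
      then have "f (m # ys) \<noteq> 0" by (rule not_less_Least)
      then show "\<exists>y. recfn_eval rf (m # ys) (Suc y)" using rf_ys[of m] by (cases "f (m # ys)") auto
    qed
  qed
  then show ?thesis unfolding computable_def by blast
qed

lemma computable_plus2: "computable 2 (\<lambda>xs. xs ! 0 + xs ! 1)"
  by (rule computable_prec[OF computable_proj[of 0 1] computable_Suc[OF computable_proj[of 0 3]]])
    simp_all

lemma computable_plus: "computable k a \<Longrightarrow> computable k b \<Longrightarrow> computable k (\<lambda>xs. a xs + b xs)"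
  using computable_compose2[OF computable_plus2] by simp

lemma computable_times2: "computable 2 (\<lambda>xs. xs ! 0 * xs ! 1)"
  by (rule computable_prec[OF computable_zero
        computable_plus[OF computable_proj[of 0 3] computable_proj[of 2 3]]]) simp_all

lemma computable_times: "computable k a \<Longrightarrow> computable k b \<Longrightarrow> computable k (\<lambda>xs. a xs * b xs)"
  using computable_compose2[OF computable_times2] by simp

lemma computable1_pred: "computable1 (\<lambda>n. n - 1)"
  unfolding computable1_iff
  by (rule computable_prec[OF computable_zero computable_proj[of 1 2]]) simp_all

lemma computable_diff2: "computable 2 (\<lambda>xs. xs ! 1 - xs ! 0)"
  by (rule computable_prec[OF computable_proj[of 0 1]
        computable_compose1[OF computable1_pred computable_proj[of 0 3]]]) simp_all

lemma computable_diff: "computable k a \<Longrightarrow> computable k b \<Longrightarrow> computable k (\<lambda>xs. a xs - b xs)"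
  using computable_compose2[OF computable_diff2, of k b a] by simp

lemma computable1_power2: "computable1 (\<lambda>n. 2 ^ n)"
  unfolding computable1_iff
  by (rule computable_prec[OF computable_const
        computable_plus[OF computable_proj[of 0 2] computable_proj[of 0 2]]]) simp_all

lemma computable1_triangle: "computable1 triangle"
  unfolding computable1_iff
  by (rule computable_prec[OF computable_zero
        computable_plus[OF computable_proj[of 0 2] computable_Suc[OF computable_proj[of 1 2]]]])
    simp_all

lemma computable1_prod_lessThan:
  assumes "computable1 h"
  shows "computable1 (\<lambda>n. \<Prod>k<n. h k)"
  unfolding computable1_iff
  by (rule computable_prec[OF computable_const computable_times[OF computable_proj[of 0 2]
        computable_compose1[OF assms computable_proj[of 1 2]]]]) simp_all

definition sit_length :: "nat \<Rightarrow> nat" where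
  "sit_length m = (LEAST n. m + 2 \<le> 2 ^ Suc n)"

lemma enc_sit_bounds: "2 ^ length s \<le> enc_sit s + 1 \<and> enc_sit s + 2 \<le> 2 ^ Suc (length s)"
  by (induction s) auto

lemma sit_length_enc_sit: "sit_length (enc_sit s) = length s"
  unfolding sit_length_def
proof (rule Least_equality)
  show "enc_sit s + 2 \<le> 2 ^ Suc (length s)" using enc_sit_bounds[of s] by simp
  fix n assume n: "enc_sit s + 2 \<le> 2 ^ Suc n"
  show "length s \<le> n"
  proof (rule ccontr)
    assume "\<not> length s \<le> n"
    then have "(2::nat) ^ Suc n \<le> 2 ^ length s" by (intro power_increasing) simp_all
    with n enc_sit_bounds[of s] show False by simp
  qed
qed

lemma computable1_sit_length: "computable1 sit_length"
proof -
  have "computable 2 (\<lambda>xs. (xs ! 1 + 2) - 2 ^ Suc (xs ! 0))"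
    by (intro computable_diff computable_plus computable_const computable_proj
        computable_compose1[OF computable1_power2] computable_Suc) simp_all
  then have "computable 1 (\<lambda>ys. LEAST n. ((n # ys) ! 1 + 2) - 2 ^ Suc ((n # ys) ! 0) = 0)"
  proof (rule computable_Least)
    fix ys :: "nat list"
    show "\<exists>n. ((n # ys) ! 1 + 2) - 2 ^ Suc ((n # ys) ! 0) = 0"
      using less_exp[of "Suc (Suc (ys ! 0))"] by (intro exI[of _ "Suc (ys ! 0)"]) simp
  qed simp
  then show ?thesis unfolding computable1_iff sit_length_def by simp
qed

lemma fst_prod_decode_eq: "fst (prod_decode m) = m - triangle (LEAST t. m < triangle (Suc t))"
proof -
  obtain a b where m: "m = prod_encode (a, b)"
    by (metis prod_decode_inverse surj_pair)
  have "(LEAST t. m < triangle (Suc t)) = a + b"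
  proof (rule Least_equality)
    show "m < triangle (Suc (a + b))" by (simp add: m prod_encode_def)
    fix t assume t: "m < triangle (Suc t)"
    show "a + b \<le> t"
    proof (rule ccontr)
      assume "\<not> a + b \<le> t"
      then have "triangle (Suc t) \<le> triangle (a + b)"
        unfolding triangle_def by (intro div_le_mono mult_le_mono) simp_all
      with t show False by (simp add: m prod_encode_def)
    qed
  qed
  moreover have "fst (prod_decode m) = a" by (simp add: m)
  moreover have "m - triangle (a + b) = a" by (simp add: m prod_encode_def)
  ultimately show ?thesis by (simp only:)
qed

lemma computable1_fst_prod_decode: "computable1 (\<lambda>m. fst (prod_decode m))"
proof -
  have "computable 2 (\<lambda>xs. Suc (xs ! 1) - triangle (Suc (xs ! 0)))"
    by (intro computable_diff computable_Suc computable_proj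
        computable_compose1[OF computable1_triangle]) simp_all
  then have "computable 1 (\<lambda>ys. LEAST t. Suc ((t # ys) ! 1) - triangle (Suc ((t # ys) ! 0)) = 0)"
  proof (rule computable_Least)
    fix ys :: "nat list"
    show "\<exists>t. Suc ((t # ys) ! 1) - triangle (Suc ((t # ys) ! 0)) = 0"
      by (intro exI[of _ "ys ! 0"]) simp
  qed simp
  then have "computable 1 (\<lambda>xs. LEAST t. xs ! 0 < triangle (Suc t))"
    by (rule computable_cong) (simp del: triangle_Suc add: Suc_le_eq)
  then have "computable 1 (\<lambda>xs. xs ! 0 - triangle (LEAST t. xs ! 0 < triangle (Suc t)))"
    by (intro computable_diff computable_proj computable_compose1[OF computable1_triangle]) simp
  then show ?thesis unfolding computable1_iff fst_prod_decode_eq .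
qed

lemma computable1_zero: "computable1 (\<lambda>_. 0)"
  unfolding computable1_def by (blast intro: recfn_eval.zero)

lemma rec_rat_map_of_nat:
  assumes "computable1 a" and "\<And>d. f d = real (a (code d))"
  shows "rec_rat_map code f"
  unfolding rec_rat_map_def
  by (intro exI[of _ a] exI[of _ "\<lambda>_. 0"] conjI allI assms computable1_zero) (simp add: assms)

lemma lower_semicomputable_if_rec_rat_map:
  assumes "rec_rat_map code f"
  shows "lower_semicomputable code f"
proof -
  obtain a b c where abc: "computable1 a" "computable1 b" "computable1 c"
    and f: "\<And>d. f d = (real (a (code d)) - real (b (code d))) / real (Suc (c (code d)))"
    using assms unfolding rec_rat_map_def by blast
  let ?fst = "\<lambda>m. fst (prod_decode m)"
  have "rec_rat_map (\<lambda>(d, n). prod_encode (code d, n)) (\<lambda>(d, n). f d)"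
    unfolding rec_rat_map_def
    using abc[THEN computable1_compose, OF computable1_fst_prod_decode]
    by (intro exI[of _ "\<lambda>m. a (?fst m)"] exI[of _ "\<lambda>m. b (?fst m)"]
        exI[of _ "\<lambda>m. c (?fst m)"]) (simp add: f)
  then show ?thesis
    unfolding lower_semicomputable_def by (intro exI[of _ "\<lambda>(d, n). f d"] conjI allI) simp_all
qed

lemma enc_sit_replicate_False: "enc_sit (replicate n False) = 2 ^ n - 1"
proof (induction n)
  case (Suc n)
  have "(1::nat) \<le> 2 ^ n" by simp
  then show ?case by (simp add: Suc.IH) (use \<open>1 \<le> 2 ^ n\<close> in linarith)
qed simp

lemma computable1_enc_bit_replicate:
  assumes "rec_bool_map enc_sit S"
  shows "computable1 (\<lambda>n. enc_bit (S (replicate n False)))"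
proof -
  obtain a where a: "computable1 a" and a_enc: "\<And>s. a (enc_sit s) = enc_bit (S s)"
    using assms unfolding rec_bool_map_def by blast
  have "computable 1 (\<lambda>xs. 2 ^ (xs ! 0) - 1)"
    by (intro computable_diff computable_const computable_compose1[OF computable1_power2]
        computable_proj) simp
  then have "computable1 (\<lambda>n. a (2 ^ n - 1))"
    unfolding computable1_iff by (rule computable_compose1[OF a])
  then show ?thesis by (simp add: a_enc[symmetric] enc_sit_replicate_False)
qed

lemma Suc_enc_bit: "Suc (enc_bit b) = (if b then 2 else 1)"
  by (simp add: enc_bit_def)

definition doubling_weight :: "(nat \<Rightarrow> bool) \<Rightarrow> nat \<Rightarrow> nat" where
  "doubling_weight T n = (\<Prod>k<n. if T k then 2 else 1)"

definition doubling_process :: "(nat \<Rightarrow> bool) \<Rightarrow> bool list \<Rightarrow> real" where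
  "doubling_process T s = real (doubling_weight T (length s))"

definition doubling_multiplier :: "(nat \<Rightarrow> bool) \<Rightarrow> bool list \<Rightarrow> bool \<Rightarrow> real" where
  "doubling_multiplier T s x = (if T (length s) then 2 else 1)"

lemma doubling_process_Nil: "doubling_process T [] = 1"
  by (simp add: doubling_process_def doubling_weight_def)

lemma doubling_process_snoc:
  "doubling_process T (s @ [x]) = doubling_process T s * doubling_multiplier T s x"
  by (simp add: doubling_process_def doubling_weight_def doubling_multiplier_def)

lemma doubling_process_pos: "0 < doubling_process T s"
  by (simp add: doubling_process_def doubling_weight_def prod_pos)

lemma test_process_doubling_process: "test_process (doubling_process T)"
  unfolding test_process_def
  by (simp add: doubling_process_Nil doubling_process_pos less_imp_le)

lemma generated_by_doubling_multiplier:
  "generated_by (doubling_multiplier T) (doubling_process T)"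
  unfolding generated_by_def by (simp add: doubling_process_Nil doubling_process_snoc)

lemma multiplier_process_doubling_multiplier: "multiplier_process (doubling_multiplier T)"
  unfolding multiplier_process_def doubling_multiplier_def by simp

lemma E_const: "E r (\<lambda>_. c) = c"
  by (simp add: E_def algebra_simps)

lemma sel_proc_doubling_process: "sel_proc r (doubling_process T) s \<longleftrightarrow> T (length s)"
proof -
  have Delta: "Delta (doubling_process T) t =
      (\<lambda>_. doubling_process T t * (doubling_multiplier T t False - 1))" for t
    by (simp add: fun_eq_iff Delta_def doubling_process_snoc doubling_multiplier_def algebra_simps)
  have E_pos: "0 < E r (Delta (doubling_process T) t) \<longleftrightarrow> T (length t)" for t
    using doubling_process_pos[of T t] by (simp add: Delta E_const doubling_multiplier_def)
  show ?thesis
    unfolding sel_proc_def E_pos by auto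
qed

lemma computable1_doubling_weight:
  assumes "computable1 (\<lambda>n. enc_bit (T n))"
  shows "computable1 (doubling_weight T)"
proof -
  have "computable1 (\<lambda>n. \<Prod>k<n. Suc (enc_bit (T k)))"
    by (rule computable1_prod_lessThan[OF computable1_compose[OF computable1_Suc assms]])
  moreover have "doubling_weight T = (\<lambda>n. \<Prod>k<n. Suc (enc_bit (T k)))"
    by (simp add: fun_eq_iff doubling_weight_def Suc_enc_bit)
  ultimately show ?thesis by simp
qed

lemma rec_rat_map_doubling_process:
  assumes "computable1 (\<lambda>n. enc_bit (T n))"
  shows "rec_rat_map enc_sit (doubling_process T)"
  by (rule rec_rat_map_of_nat[OF computable1_compose[OF
        computable1_doubling_weight[OF assms] computable1_sit_length]])
    (simp add: doubling_process_def sit_length_enc_sit)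

lemma doubling_process_in_F_C:
  assumes "computable1 (\<lambda>n. enc_bit (T n))"
  shows "doubling_process T \<in> F_C"
  unfolding F_C_def
  by (simp add: test_process_doubling_process doubling_process_pos rec_rat_map_doubling_process[OF assms])
    (simp add: doubling_process_def)

lemma doubling_process_in_F_ML:
  assumes "computable1 (\<lambda>n. enc_bit (T n))"
  shows "doubling_process T \<in> F_ML"
  unfolding F_ML_def
  by (simp add: test_process_doubling_process lower_semicomputable_if_rec_rat_map
      rec_rat_map_doubling_process[OF assms])

lemma doubling_process_in_F_wML:
  assumes "computable1 (\<lambda>n. enc_bit (T n))"
  shows "doubling_process T \<in> F_wML"
proof -
  let ?code = "\<lambda>(s, x). prod_encode (enc_sit s, enc_bit x)"
  have "computable1 (\<lambda>m. Suc (enc_bit (T (sit_length (fst (prod_decode m))))))"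
    by (rule computable1_compose[OF computable1_Suc computable1_compose[OF assms
          computable1_compose[OF computable1_sit_length computable1_fst_prod_decode]]])
  then have "rec_rat_map ?code (\<lambda>(s, x). doubling_multiplier T s x)"
    by (rule rec_rat_map_of_nat)
      (simp add: doubling_multiplier_def sit_length_enc_sit Suc_enc_bit split: prod.split)
  then have lsc: "lower_semicomputable ?code (\<lambda>(s, x). doubling_multiplier T s x)"
    by (rule lower_semicomputable_if_rec_rat_map)
  show ?thesis
    unfolding F_wML_def
    by (intro CollectI conjI exI[of _ "doubling_multiplier T"] lsc test_process_doubling_process
        multiplier_process_doubling_multiplier generated_by_doubling_multiplier)
qed

lemma doubling_process_in_F_class:
  assumes "computable1 (\<lambda>n. enc_bit (T n))"
  shows "doubling_process T \<in> F_class R"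
  using doubling_process_in_F_C[OF assms] doubling_process_in_F_ML[OF assms]
    doubling_process_in_F_wML[OF assms]
  by (cases R) simp_all

theorem proposition28:
  fixes p q :: real and R :: randomness and S :: "bool list \<Rightarrow> bool"
  assumes "p \<in> {0..1}" and "q \<in> {0..1}"
    and "temporal S" and "rec_bool_map enc_sit S"
  shows "S \<in> sel_class p q (F_class R)"
proof -
  define T where "T n = S (replicate n False)" for n
  have "computable1 (\<lambda>n. enc_bit (T n))"
    unfolding T_def by (rule computable1_enc_bit_replicate[OF \<open>rec_bool_map enc_sit S\<close>])
  then have "doubling_process T \<in> F_class R"
    by (rule doubling_process_in_F_class)
  moreover have "S = sel_proc p (doubling_process T)"
  proof
    fix s
    show "S s = sel_proc p (doubling_process T) s"
      using \<open>temporal S\<close> unfolding sel_proc_doubling_process temporal_def T_def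
      by (metis length_replicate)
  qed
  ultimately show ?thesis
    unfolding sel_class_def by blast
qed

end
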